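(* Let $r>0$ and $s$ be real numbers. Let $e_0,e_1,e_2,\dots$ be independent and identically distributed real random variables with cumulative distribution function $F$ having probability density function $f$. Let $X_0$ be a real random variable such that $(X_0,e_0)$ is independent of $(e_1,e_2,\dots)$, and define $X_i - rX_{i-1} = e_i + s e_{i-1}$ for $i\ge 1$. Fix $x\in\mathbb{R}$, put $M_0=-\infty$, $M_n=\max_{1\le i\le n}X_i$ for $n\ge1$, and $u_n=P(M_n\le x)$ for $n\ge 0$. Let $G_0(\mathbf{y})=P(X_0\le y_0,\ e_0\le y_1)$ for $\mathbf{y}=(y_0,y_1)\in\mathbb{R}^2$. Define the linear operator $\mathcal{K}$ on functions $h$ of $\mathbf{z}=(z_0,z_1)\in\mathbb{R}^2$ by $$\mathcal{K}h(\mathbf{y}) = r\int\int_{a_{\mathbf{y}\mathbf{z}}}^{\infty} dz_0\, f(y_{0x}-rz_0-sz_1)\, h(z_0,dz_1),$$ where $y_{0x}=\min(y_0,x)$, $a_{\mathbf{y}\mathbf{z}}=(y_{0x}-sz_1-y_1)/r$, and $h(z_0,dz_1)$ denotes Lebesgue--Stieltjes integration in $z_1$. Set $a_n=[\mathcal{K}^nG_0(\mathbf{y})]_{\mathbf{y}=(\infty,\infty)}$ for $n\ge 0$. Then $u_n=a_n$ for all $n\ge 0$.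
   Context: Evaluation at $\mathbf{y}=(\infty,\infty)$ means the limit as $y_0\to\infty$ and $y_1\to\infty$. $\mathcal{K}^0$ is the identity, so $a_0=1$. *)

theory Defs
  imports "HOL-Probability.Probability"
begin

definition run_max :: "(nat \<Rightarrow> 'a \<Rightarrow> real) \<Rightarrow> nat \<Rightarrow> 'a \<Rightarrow> ereal" where
  "run_max X n \<omega> = (if n = 0 then -\<infinity> else ereal (Max ((\<lambda>i. X i \<omega>) ` {1..n})))"

text \<open>The inner integral is the Lebesgue--Stieltjes integral in z1 with respect
  to the function z1 |-> h(z0,z1) (via interval_measure, i.e. for monotone right-continuous
  h(z0,.)), restricted to z0 > a_{yz}; the outer integral is the Lebesgue integral in z0.\<close>
definition Kop :: "real \<Rightarrow> real \<Rightarrow> (real \<Rightarrow> real) \<Rightarrow> real \<Rightarrow>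
    (real \<times> real \<Rightarrow> real) \<Rightarrow> real \<times> real \<Rightarrow> real" where
  "Kop r s f x h y =
     r * (\<integral>z0. (\<integral>z1. indicator {z1. (min (fst y) x - s * z1 - snd y) / r < z0} z1
                        * f (min (fst y) x - r * z0 - s * z1)
                 \<partial>(interval_measure (\<lambda>z1. h (z0, z1)))) \<partial>lborel)"

end

theory Submission
  imports Defs
begin

text \<open>
  Put \<open>G\<^sub>n(y) = P(M\<^sub>n \<le> x, X\<^sub>n \<le> y\<^sub>0, e\<^sub>n \<le> y\<^sub>1)\<close>; then \<open>G\<^sub>0\<close> is the initial law and
  \<open>G\<^sub>n(y) \<rightarrow> u\<^sub>n\<close> as \<open>y \<rightarrow> (\<infinity>, \<infinity>)\<close>, so it suffices to show \<open>\<K> G\<^sub>n = G\<^sub>n\<^sub>+\<^sub>1\<close>.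
  The Stieltjes measure of \<open>z\<^sub>1 \<mapsto> G\<^sub>n(z\<^sub>0, z\<^sub>1)\<close> is the law of \<open>e\<^sub>n\<close> restricted to the event
  \<open>{M\<^sub>n \<le> x, X\<^sub>n \<le> z\<^sub>0}\<close>. Exchanging the integrals and substituting \<open>u = y\<^sub>0\<^sub>x - r z\<^sub>0 - s e\<^sub>n\<close>
  turns \<open>\<K> G\<^sub>n(y)\<close> into the expectation, on \<open>{M\<^sub>n \<le> x}\<close>, of the distribution function of
  \<open>f\<close> at \<open>min (y\<^sub>0\<^sub>x - r X\<^sub>n - s e\<^sub>n) y\<^sub>1\<close>. As \<open>e\<^sub>n\<^sub>+\<^sub>1\<close> has density \<open>f\<close> and is independent of
  \<open>(X\<^sub>0, e\<^sub>0, \<dots>, e\<^sub>n)\<close>, which determine \<open>M\<^sub>n\<close>, \<open>X\<^sub>n\<close> and \<open>e\<^sub>n\<close>, this expectation is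
  \<open>P(M\<^sub>n \<le> x, e\<^sub>n\<^sub>+\<^sub>1 \<le> y\<^sub>0\<^sub>x - r X\<^sub>n - s e\<^sub>n, e\<^sub>n\<^sub>+\<^sub>1 \<le> y\<^sub>1) = G\<^sub>n\<^sub>+\<^sub>1(y)\<close>.
\<close>

lemma interval_measure_cdf:
  assumes "finite_borel_measure N"
  shows "interval_measure (cdf N) = N"
proof -
  interpret finite_borel_measure N by fact
  have "finite_borel_measure (interval_measure (cdf N))"
    by (rule finite_borel_measure_interval_measure[OF cdf_nondecreasing cdf_is_right_cont
          cdf_lim_at_bot cdf_lim_at_top]) auto
  then show ?thesis
    by (rule cdf_unique'[OF _ assms])
       (simp add: cdf_interval_measure cdf_nondecreasing cdf_is_right_cont cdf_lim_at_bot)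
qed

lemma nn_integral_reflected_density:
  fixes f :: "real \<Rightarrow> real"
  assumes "r > 0" and [measurable]: "f \<in> borel_measurable borel"
  shows "(\<integral>\<^sup>+t. indicator {a..} t * indicator {(c - b) / r<..} t * ennreal (f (c - r * t)) \<partial>lborel)
       = ennreal (1 / r) * (\<integral>\<^sup>+u\<in>{..min (c - r * a) b}. ennreal (f u) \<partial>lborel)"
proof -
  let ?F = "\<lambda>t. indicator {a..} t * indicator {(c - b) / r<..} t * ennreal (f (c - r * t))"
  have "(\<integral>\<^sup>+t. ?F t \<partial>lborel) = ennreal \<bar>- 1 / r\<bar> * (\<integral>\<^sup>+u. ?F (c / r + (- 1 / r) * u) \<partial>lborel)"
    using \<open>r > 0\<close> by (intro nn_integral_real_affine) auto
  also have "(\<integral>\<^sup>+u. ?F (c / r + (- 1 / r) * u) \<partial>lborel)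
      = (\<integral>\<^sup>+u. indicator {..c - r * a} u * indicator {..<b} u * ennreal (f u) \<partial>lborel)"
  proof (rule nn_integral_cong)
    fix u :: real
    have "c / r + (- 1 / r) * u = (c - u) / r" "c - r * ((c - u) / r) = u"
      using \<open>r > 0\<close> by (simp_all add: field_simps)
    moreover have "a \<le> (c - u) / r \<longleftrightarrow> u \<le> c - r * a" "(c - b) / r < (c - u) / r \<longleftrightarrow> u < b"
      using \<open>r > 0\<close> by (simp_all add: pos_le_divide_eq divide_less_cancel algebra_simps)
    ultimately show "?F (c / r + (- 1 / r) * u) = indicator {..c - r * a} u * indicator {..<b} u * ennreal (f u)"
      by (simp split: split_indicator)
  qed
  also have "\<dots> = (\<integral>\<^sup>+u\<in>{..min (c - r * a) b}. ennreal (f u) \<partial>lborel)"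
    by (intro nn_integral_cong_AE eventually_mono[OF AE_lborel_singleton[of b]])
       (auto split: split_indicator)
  finally show ?thesis
    using \<open>r > 0\<close> by simp
qed

context prob_space
begin

lemma finite_borel_measure_distr_restricted:
  assumes "S \<in> events" and [measurable]: "(Y :: 'a \<Rightarrow> real) \<in> borel_measurable M"
  shows "finite_borel_measure (distr (density M (indicator S)) borel Y)"
proof -
  have "emeasure (density M (indicator S)) (space M) \<le> emeasure M (space M)"
    using assms(1) by (simp add: emeasure_restricted emeasure_mono sets.sets_into_space)
  then have "finite_measure (density M (indicator S))"
    by (intro finite_measureI) (auto simp: top_unique)
  then show ?thesis
    by (auto simp: finite_borel_measure_def finite_borel_measure_axioms_def finite_measure.finite_measure_distr)
qed

lemma cdf_distr_restricted:
  assumes "S \<in> events" and [measurable]: "(Y :: 'a \<Rightarrow> real) \<in> borel_measurable M"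
  shows "cdf (distr (density M (indicator S)) borel Y) z = prob {\<omega> \<in> S. Y \<omega> \<le> z}"
proof -
  have "{\<omega> \<in> S. Y \<omega> \<le> z} = S \<inter> (Y -` {..z} \<inter> space M)"
    using sets.sets_into_space[OF assms(1)] by auto
  then show ?thesis
    using assms(1) by (simp add: cdf_def measure_def emeasure_distr emeasure_restricted)
qed

lemma tendsto_prob_le_at_top:
  assumes "S \<in> events" and [measurable]: "(Y :: 'a \<Rightarrow> real) \<in> borel_measurable M"
  shows "((\<lambda>t. prob {\<omega> \<in> S. Y \<omega> \<le> t}) \<longlongrightarrow> prob S) at_top"
proof -
  interpret finite_borel_measure "distr (density M (indicator S)) borel Y"
    using assms by (rule finite_borel_measure_distr_restricted)
  have "measure (distr (density M (indicator S)) borel Y) UNIV = prob S"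
    using assms(1) sets.sets_into_space[OF assms(1)]
    by (simp add: measure_def emeasure_distr emeasure_restricted Int_absorb2)
  moreover have "cdf (distr (density M (indicator S)) borel Y) = (\<lambda>t. prob {\<omega> \<in> S. Y \<omega> \<le> t})"
    using cdf_distr_restricted[OF assms] by (rule ext)
  ultimately show ?thesis
    using cdf_lim_at_top by simp
qed

lemma tendsto_prob_le_le_at_top:
  assumes "S \<in> events"
    and [measurable]: "(U :: 'a \<Rightarrow> real) \<in> borel_measurable M" "(V :: 'a \<Rightarrow> real) \<in> borel_measurable M"
  shows "((\<lambda>(a, b). prob {\<omega> \<in> S. U \<omega> \<le> a \<and> V \<omega> \<le> b}) \<longlongrightarrow> prob S) (at_top \<times>\<^sub>F at_top)"
proof (rule tendsto_sandwich)
  let ?P = "\<lambda>t. prob {\<omega> \<in> S. max (U \<omega>) (V \<omega>) \<le> t}"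
  have "filterlim (\<lambda>(a, b). min a b) at_top (at_top \<times>\<^sub>F at_top :: (real \<times> real) filter)"
    unfolding filterlim_at_top eventually_prod_filter
    by (auto intro!: exI[of _ "\<lambda>a. _ \<le> a"])
  with tendsto_prob_le_at_top[OF assms(1), of "\<lambda>\<omega>. max (U \<omega>) (V \<omega>)"]
  show "((\<lambda>p. ?P (case p of (a, b) \<Rightarrow> min a b)) \<longlongrightarrow> prob S) (at_top \<times>\<^sub>F at_top)"
    by (auto intro: filterlim_compose)
  show "eventually (\<lambda>p. ?P (case p of (a, b) \<Rightarrow> min a b)
      \<le> (case p of (a, b) \<Rightarrow> prob {\<omega> \<in> S. U \<omega> \<le> a \<and> V \<omega> \<le> b})) (at_top \<times>\<^sub>F at_top)"
    using assms(1) by (intro always_eventually) (auto intro!: finite_measure_mono)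
  show "eventually (\<lambda>p. (case p of (a, b) \<Rightarrow> prob {\<omega> \<in> S. U \<omega> \<le> a \<and> V \<omega> \<le> b}) \<le> prob S)
      (at_top \<times>\<^sub>F at_top)"
    using assms(1) by (intro always_eventually) (auto intro!: finite_measure_mono)
qed simp

lemma indep_set_mono:
  assumes "indep_set A B" "A' \<subseteq> A" "B' \<subseteq> B"
  shows "indep_set A' B'"
  using assms unfolding indep_sets2_eq by blast

lemma vimage_sets_comp_subset:
  assumes "X \<in> M \<rightarrow>\<^sub>M S" "g \<in> S \<rightarrow>\<^sub>M T"
  shows "{(\<lambda>\<omega>. g (X \<omega>)) -` A \<inter> space M | A. A \<in> sets T} \<subseteq> {X -` B \<inter> space M | B. B \<in> sets S}"
proof clarify
  fix A assume "A \<in> sets T"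
  then have "g -` A \<inter> space S \<in> sets S" "(\<lambda>\<omega>. g (X \<omega>)) -` A \<inter> space M = X -` (g -` A \<inter> space S) \<inter> space M"
    using assms by (auto simp: measurable_def)
  then show "\<exists>B. (\<lambda>\<omega>. g (X \<omega>)) -` A \<inter> space M = X -` B \<inter> space M \<and> B \<in> sets S"
    by blast
qed

lemma nn_integral_indep_set:
  assumes ind: "indep_set {X -` A \<inter> space M | A. A \<in> sets S} {Y -` B \<inter> space M | B. B \<in> sets T}"
    and [measurable]: "X \<in> M \<rightarrow>\<^sub>M S" "Y \<in> M \<rightarrow>\<^sub>M T" "h \<in> borel_measurable (S \<Otimes>\<^sub>M T)"
  shows "(\<integral>\<^sup>+\<omega>. h (X \<omega>, Y \<omega>) \<partial>M) = (\<integral>\<^sup>+a. \<integral>\<^sup>+b. h (a, b) \<partial>distr M T Y \<partial>distr M S X)"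
proof -
  interpret PX: prob_space "distr M S X" by (rule prob_space_distr) simp
  interpret PY: prob_space "distr M T Y" by (rule prob_space_distr) simp
  interpret pair_sigma_finite "distr M S X" "distr M T Y" ..
  have "(\<integral>\<^sup>+\<omega>. h (X \<omega>, Y \<omega>) \<partial>M) = (\<integral>\<^sup>+p. h p \<partial>distr M (S \<Otimes>\<^sub>M T) (\<lambda>\<omega>. (X \<omega>, Y \<omega>)))"
    by (simp add: nn_integral_distr)
  also have "distr M (S \<Otimes>\<^sub>M T) (\<lambda>\<omega>. (X \<omega>, Y \<omega>)) = distr M S X \<Otimes>\<^sub>M distr M T Y"
  proof (rule pair_measure_eqI[symmetric])
    fix A B assume "A \<in> sets (distr M S X)" "B \<in> sets (distr M T Y)"
    then have [measurable]: "A \<in> sets S" "B \<in> sets T" by auto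
    have "(\<lambda>\<omega>. (X \<omega>, Y \<omega>)) -` (A \<times> B) \<inter> space M = (X -` A \<inter> space M) \<inter> (Y -` B \<inter> space M)"
      by auto
    moreover have "prob ((X -` A \<inter> space M) \<inter> (Y -` B \<inter> space M)) = prob (X -` A \<inter> space M) * prob (Y -` B \<inter> space M)"
      by (rule indep_setD[OF ind]) auto
    ultimately show "emeasure (distr M S X) A * emeasure (distr M T Y) B
        = emeasure (distr M (S \<Otimes>\<^sub>M T) (\<lambda>\<omega>. (X \<omega>, Y \<omega>))) (A \<times> B)"
      by (simp add: emeasure_distr emeasure_eq_measure ennreal_mult')
  qed (simp_all add: PX.sigma_finite_measure_axioms PY.sigma_finite_measure_axioms)
  also have "(\<integral>\<^sup>+p. h p \<partial>(distr M S X \<Otimes>\<^sub>M distr M T Y)) = (\<integral>\<^sup>+a. \<integral>\<^sup>+b. h (a, b) \<partial>distr M T Y \<partial>distr M S X)"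
    by (rule PY.nn_integral_fst[symmetric]) simp
  finally show ?thesis .
qed

lemma nn_integral_indep_set_triple:
  assumes ind1: "indep_set {Z -` A \<inter> space M | A. A \<in> sets S}
      {(\<lambda>\<omega>. (Y \<omega>, V \<omega>)) -` B \<inter> space M | B. B \<in> sets (T \<Otimes>\<^sub>M U)}"
    and ind2: "indep_set {Y -` A \<inter> space M | A. A \<in> sets T} {V -` B \<inter> space M | B. B \<in> sets U}"
    and [measurable]: "Z \<in> M \<rightarrow>\<^sub>M S" "Y \<in> M \<rightarrow>\<^sub>M T" "V \<in> M \<rightarrow>\<^sub>M U"
      "h \<in> borel_measurable ((S \<Otimes>\<^sub>M T) \<Otimes>\<^sub>M U)"
  shows "(\<integral>\<^sup>+\<omega>. h ((Z \<omega>, Y \<omega>), V \<omega>) \<partial>M) = (\<integral>\<^sup>+\<omega>. \<integral>\<^sup>+v. h ((Z \<omega>, Y \<omega>), v) \<partial>distr M U V \<partial>M)"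
proof -
  interpret PV: prob_space "distr M U V" by (rule prob_space_distr) simp
  have ind_ZY: "indep_set {Z -` A \<inter> space M | A. A \<in> sets S} {Y -` B \<inter> space M | B. B \<in> sets T}"
    using vimage_sets_comp_subset[of "\<lambda>\<omega>. (Y \<omega>, V \<omega>)" "T \<Otimes>\<^sub>M U" fst T]
    by (intro indep_set_mono[OF ind1]) simp_all
  have "(\<integral>\<^sup>+\<omega>. h ((Z \<omega>, Y \<omega>), V \<omega>) \<partial>M)
      = (\<integral>\<^sup>+z. \<integral>\<^sup>+w. h ((z, fst w), snd w) \<partial>distr M (T \<Otimes>\<^sub>M U) (\<lambda>\<omega>. (Y \<omega>, V \<omega>)) \<partial>distr M S Z)"
    using nn_integral_indep_set[OF ind1, of "\<lambda>(z, w). h ((z, fst w), snd w)"] by simp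
  also have "\<dots> = (\<integral>\<^sup>+z. \<integral>\<^sup>+y. \<integral>\<^sup>+v. h ((z, y), v) \<partial>distr M U V \<partial>distr M T Y \<partial>distr M S Z)"
  proof (rule nn_integral_cong)
    fix z assume "z \<in> space (distr M S Z)"
    then have [measurable]: "z \<in> space S" by simp
    show "(\<integral>\<^sup>+w. h ((z, fst w), snd w) \<partial>distr M (T \<Otimes>\<^sub>M U) (\<lambda>\<omega>. (Y \<omega>, V \<omega>)))
        = (\<integral>\<^sup>+y. \<integral>\<^sup>+v. h ((z, y), v) \<partial>distr M U V \<partial>distr M T Y)"
      using nn_integral_indep_set[OF ind2, of "\<lambda>(y, v). h ((z, y), v)"] by (simp add: nn_integral_distr)
  qed
  also have "\<dots> = (\<integral>\<^sup>+\<omega>. \<integral>\<^sup>+v. h ((Z \<omega>, Y \<omega>), v) \<partial>distr M U V \<partial>M)"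
    using nn_integral_indep_set[OF ind_ZY, of "\<lambda>p. \<integral>\<^sup>+v. h (p, v) \<partial>distr M U V"]
    by (simp add: PV.borel_measurable_nn_integral)
  finally show ?thesis .
qed

end

text \<open>With \<open>z = (X\<^sub>0, e\<^sub>0)\<close> and \<open>u k = e\<^sub>k\<^sub>+\<^sub>1\<close>, \<open>arma_path r s z u k\<close> is \<open>X\<^sub>k\<close> and
  \<open>arma_noise z u k\<close> is \<open>e\<^sub>k\<close>; \<open>truncate_seq n u\<close> retains exactly \<open>e\<^sub>1, \<dots>, e\<^sub>n\<close>.\<close>

fun arma_noise :: "real \<times> real \<Rightarrow> (nat \<Rightarrow> real) \<Rightarrow> nat \<Rightarrow> real" where
  "arma_noise z u 0 = snd z"
| "arma_noise z u (Suc k) = u k"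

fun arma_path :: "real \<Rightarrow> real \<Rightarrow> real \<times> real \<Rightarrow> (nat \<Rightarrow> real) \<Rightarrow> nat \<Rightarrow> real" where
  "arma_path r s z u 0 = fst z"
| "arma_path r s z u (Suc k) = r * arma_path r s z u k + u k + s * arma_noise z u k"

definition truncate_seq :: "nat \<Rightarrow> (nat \<Rightarrow> real) \<Rightarrow> nat \<Rightarrow> real" where
  "truncate_seq n u i = (if i < n then u i else 0)"

lemma arma_noise_truncate_seq: "k \<le> n \<Longrightarrow> arma_noise z (truncate_seq n u) k = arma_noise z u k"
  by (cases k) (auto simp: truncate_seq_def)

lemma arma_path_truncate_seq: "k \<le> n \<Longrightarrow> arma_path r s z (truncate_seq n u) k = arma_path r s z u k"
  by (induction k) (auto simp: arma_noise_truncate_seq truncate_seq_def)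

lemma measurable_arma_noise [measurable]:
  "(\<lambda>p. arma_noise (fst p) (snd p) k) \<in> borel_measurable ((borel \<Otimes>\<^sub>M borel) \<Otimes>\<^sub>M PiM UNIV (\<lambda>_. borel))"
  by (cases k) simp_all

lemma measurable_arma_path [measurable]:
  "(\<lambda>p. arma_path r s (fst p) (snd p) k) \<in> borel_measurable ((borel \<Otimes>\<^sub>M borel) \<Otimes>\<^sub>M PiM UNIV (\<lambda>_. borel))"
  by (induction k) simp_all

lemma measurable_truncate_seq [measurable]:
  "truncate_seq n \<in> PiM UNIV (\<lambda>_. borel) \<rightarrow>\<^sub>M PiM UNIV (\<lambda>_. (borel :: real measure))"
  by (rule measurable_PiM_single') (auto simp: truncate_seq_def)

locale arma_recursion = prob_space M for M :: "'a measure" +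
  fixes r s x :: real and f :: "real \<Rightarrow> real" and e X :: "nat \<Rightarrow> 'a \<Rightarrow> real"
  assumes r_pos: "r > 0"
    and f_nonneg: "\<And>t. f t \<ge> 0"
    and f_measurable [measurable]: "f \<in> borel_measurable borel"
    and e_distributed: "\<And>i. distributed M lborel (e i) (\<lambda>t. ennreal (f t))"
    and e_indep: "indep_vars (\<lambda>_. borel) e UNIV"
    and X0_measurable [measurable]: "X 0 \<in> borel_measurable M"
    and initial_indep: "indep_set
           {(\<lambda>\<omega>. (X 0 \<omega>, e 0 \<omega>)) -` A \<inter> space M | A. A \<in> sets (borel :: (real \<times> real) measure)}
           {(\<lambda>\<omega> i. e (Suc i) \<omega>) -` A \<inter> space M | A. A \<in> sets (PiM (UNIV :: nat set) (\<lambda>_. borel :: real measure))}"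
    and X_Suc: "\<And>i \<omega>. \<omega> \<in> space M \<Longrightarrow> X (Suc i) \<omega> - r * X i \<omega> = e (Suc i) \<omega> + s * e i \<omega>"
begin

definition initial :: "'a \<Rightarrow> real \<times> real" where
  "initial \<omega> = (X 0 \<omega>, e 0 \<omega>)"

definition noise :: "'a \<Rightarrow> nat \<Rightarrow> real" where
  "noise \<omega> i = e (Suc i) \<omega>"

text \<open>For \<open>n = 0\<close> the condition is vacuous, matching \<open>M\<^sub>0 = -\<infinity>\<close>.\<close>

definition stays_below :: "nat \<Rightarrow> 'a set" where
  "stays_below n = {\<omega> \<in> space M. \<forall>i\<in>{1..n}. X i \<omega> \<le> x}"

definition G :: "nat \<Rightarrow> real \<times> real \<Rightarrow> real" where
  "G n y = prob {\<omega> \<in> stays_below n. X n \<omega> \<le> fst y \<and> e n \<omega> \<le> snd y}"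

definition kernel :: "real \<times> real \<Rightarrow> real \<Rightarrow> real \<Rightarrow> real" where
  "kernel y t z = indicator {z. (min (fst y) x - s * z - snd y) / r < t} z * f (min (fst y) x - r * t - s * z)"

lemma Kop_eq_kernel:
  "Kop r s f x h y = r * (\<integral>t. (\<integral>z. kernel y t z \<partial>interval_measure (\<lambda>z. h (t, z))) \<partial>lborel)"
  by (simp add: Kop_def kernel_def)

lemma e_measurable [measurable]: "e i \<in> borel_measurable M"
  using distributed_measurable[OF e_distributed[of i]] by simp

lemma measurable_initial [measurable]: "initial \<in> M \<rightarrow>\<^sub>M borel \<Otimes>\<^sub>M borel"
  unfolding initial_def by measurable

lemma measurable_noise [measurable]: "noise \<in> M \<rightarrow>\<^sub>M PiM UNIV (\<lambda>_. borel)"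
  unfolding noise_def by (rule measurable_PiM_single') auto

lemma e_eq_arma_noise: "e k \<omega> = arma_noise (initial \<omega>) (noise \<omega>) k"
  by (cases k) (auto simp: initial_def noise_def)

lemma X_eq_arma_path: "\<omega> \<in> space M \<Longrightarrow> X k \<omega> = arma_path r s (initial \<omega>) (noise \<omega>) k"
proof (induction k)
  case (Suc k)
  have "noise \<omega> k = e (Suc k) \<omega>" "arma_noise (initial \<omega>) (noise \<omega>) k = e k \<omega>"
    by (simp add: noise_def) (rule e_eq_arma_noise[symmetric])
  with Suc X_Suc[OF Suc.prems, of k] show ?case
    by (simp add: algebra_simps)
qed (simp add: initial_def)

lemma X_measurable [measurable]: "X k \<in> borel_measurable M"
proof -
  have "(\<lambda>\<omega>. arma_path r s (fst (initial \<omega>, noise \<omega>)) (snd (initial \<omega>, noise \<omega>)) k) \<in> borel_measurable M"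
    by measurable
  then show ?thesis
    by (rule measurable_cong[THEN iffD1, rotated]) (simp add: X_eq_arma_path)
qed

lemma stays_below_events [measurable]: "stays_below n \<in> events"
  unfolding stays_below_def by measurable

lemma initial_noise_indep:
  "indep_set {initial -` A \<inter> space M | A. A \<in> sets (borel \<Otimes>\<^sub>M borel)}
     {noise -` B \<inter> space M | B. B \<in> sets (PiM UNIV (\<lambda>_. borel))}"
  using initial_indep unfolding initial_def[abs_def] noise_def[abs_def] borel_prod .

lemma truncated_noise_next_indep:
  "indep_set {(\<lambda>\<omega>. truncate_seq n (noise \<omega>)) -` A \<inter> space M | A. A \<in> sets (PiM UNIV (\<lambda>_. borel))}
     {e (Suc n) -` B \<inter> space M | B. B \<in> sets borel}"
proof -
  let ?R = "\<lambda>I \<omega>. restrict (\<lambda>i. e i \<omega>) I"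
  let ?shift = "\<lambda>w. \<lambda>i. if i < n then w (Suc i) else 0"
  have indep: "indep_set (sigma_sets (space M) {?R {1..n} -` A \<inter> space M | A. A \<in> sets (PiM {1..n} (\<lambda>_. borel))})
      (sigma_sets (space M) {?R {Suc n} -` A \<inter> space M | A. A \<in> sets (PiM {Suc n} (\<lambda>_. borel))})"
    using indep_var_restrict[OF e_indep, of "{1..n}" "{Suc n}"] by (simp add: indep_var_eq)
  have "?shift \<in> PiM {1..n} (\<lambda>_. borel) \<rightarrow>\<^sub>M PiM UNIV (\<lambda>_. (borel :: real measure))"
  proof (rule measurable_PiM_single')
    show "(\<lambda>w. if i < n then w (Suc i) else 0) \<in> borel_measurable (PiM {1..n} (\<lambda>_. borel))" for i
      by (cases "i < n") (auto intro!: measurable_component_singleton)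
  qed auto
  moreover have "(\<lambda>\<omega>. truncate_seq n (noise \<omega>)) = (\<lambda>\<omega>. ?shift (?R {1..n} \<omega>))"
    by (auto simp: fun_eq_iff truncate_seq_def noise_def)
  ultimately have "{(\<lambda>\<omega>. truncate_seq n (noise \<omega>)) -` A \<inter> space M | A. A \<in> sets (PiM UNIV (\<lambda>_. borel))}
      \<subseteq> {?R {1..n} -` A \<inter> space M | A. A \<in> sets (PiM {1..n} (\<lambda>_. borel))}"
    using vimage_sets_comp_subset[of "?R {1..n}" "PiM {1..n} (\<lambda>_. borel)" ?shift] by simp
  moreover have "{e (Suc n) -` B \<inter> space M | B. B \<in> sets borel}
      \<subseteq> {?R {Suc n} -` A \<inter> space M | A. A \<in> sets (PiM {Suc n} (\<lambda>_. borel))}"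
    using vimage_sets_comp_subset[of "?R {Suc n}" "PiM {Suc n} (\<lambda>_. borel)" "\<lambda>w. w (Suc n)" borel]
    by simp
  ultimately show ?thesis
    by (intro indep_set_mono[OF indep] subset_trans[OF _ sigma_sets_superset_generator])
qed

lemma emeasure_distr_e_atMost:
  "emeasure (distr M borel (e k)) {..q} = (\<integral>\<^sup>+u\<in>{..q}. ennreal (f u) \<partial>lborel)"
proof -
  have "emeasure (distr M borel (e k)) {..q} = emeasure (distr M lborel (e k)) {..q}"
    by (simp add: emeasure_distr)
  also have "distr M lborel (e k) = density lborel f"
    using e_distributed[of k] by (simp add: distributed_def)
  finally show ?thesis
    by (simp add: emeasure_density)
qed

lemma nn_integral_next_noise:
  assumes "h \<in> borel_measurable (((borel \<Otimes>\<^sub>M borel) \<Otimes>\<^sub>M PiM UNIV (\<lambda>_. borel)) \<Otimes>\<^sub>M borel)"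
  shows "(\<integral>\<^sup>+\<omega>. h ((initial \<omega>, truncate_seq n (noise \<omega>)), e (Suc n) \<omega>) \<partial>M)
    = (\<integral>\<^sup>+\<omega>. \<integral>\<^sup>+v. h ((initial \<omega>, truncate_seq n (noise \<omega>)), v) \<partial>distr M borel (e (Suc n)) \<partial>M)"
proof -
  have "indep_set {initial -` A \<inter> space M | A. A \<in> sets (borel \<Otimes>\<^sub>M borel)}
      {(\<lambda>\<omega>. (truncate_seq n (noise \<omega>), e (Suc n) \<omega>)) -` B \<inter> space M
        | B. B \<in> sets (PiM UNIV (\<lambda>_. borel) \<Otimes>\<^sub>M borel)}"
    using vimage_sets_comp_subset[OF measurable_noise, of "\<lambda>u. (truncate_seq n u, u n)"]
    by (intro indep_set_mono[OF initial_noise_indep]) (simp_all add: noise_def)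
  from nn_integral_indep_set_triple[OF this truncated_noise_next_indep _ _ _ assms]
  show ?thesis
    by simp
qed

lemma emeasure_next_noise_le:
  assumes [measurable]: "\<phi> \<in> borel_measurable (borel \<Otimes>\<^sub>M borel)"
  shows "emeasure M {\<omega> \<in> stays_below n. e (Suc n) \<omega> \<le> \<phi> (X n \<omega>, e n \<omega>)}
    = (\<integral>\<^sup>+\<omega>\<in>stays_below n. (\<integral>\<^sup>+u\<in>{..\<phi> (X n \<omega>, e n \<omega>)}. ennreal (f u) \<partial>lborel) \<partial>M)"
proof -
  define Q where "Q p \<longleftrightarrow> (\<forall>i\<in>{1..n}. arma_path r s (fst p) (snd p) i \<le> x)" for p
  define \<psi> where "\<psi> p = \<phi> (arma_path r s (fst p) (snd p) n, arma_noise (fst p) (snd p) n)" for p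
  define past where "past \<omega> = (initial \<omega>, truncate_seq n (noise \<omega>))" for \<omega>
  have [measurable]: "Measurable.pred ((borel \<Otimes>\<^sub>M borel) \<Otimes>\<^sub>M PiM UNIV (\<lambda>_. borel)) Q"
    "\<psi> \<in> borel_measurable ((borel \<Otimes>\<^sub>M borel) \<Otimes>\<^sub>M PiM UNIV (\<lambda>_. borel))"
    unfolding Q_def \<psi>_def by measurable
  have past: "\<omega> \<in> stays_below n \<longleftrightarrow> Q (past \<omega>)" "\<phi> (X n \<omega>, e n \<omega>) = \<psi> (past \<omega>)"
    if "\<omega> \<in> space M" for \<omega>
    using that by (auto simp: stays_below_def Q_def \<psi>_def past_def X_eq_arma_path
        arma_path_truncate_seq arma_noise_truncate_seq e_eq_arma_noise[of n])
  define h where "h q = (if Q (fst q) \<and> snd q \<le> \<psi> (fst q) then 1 else 0 :: ennreal)" for q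
  have [measurable]: "h \<in> borel_measurable (((borel \<Otimes>\<^sub>M borel) \<Otimes>\<^sub>M PiM UNIV (\<lambda>_. borel)) \<Otimes>\<^sub>M borel)"
    unfolding h_def by measurable
  have h_next: "(\<integral>\<^sup>+v. h (p, v) \<partial>distr M borel (e (Suc n)))
      = (if Q p then \<integral>\<^sup>+u\<in>{..\<psi> p}. ennreal (f u) \<partial>lborel else 0)" for p
  proof (cases "Q p")
    case True
    then have "(\<lambda>v. h (p, v)) = indicator {..\<psi> p}"
      by (auto simp: h_def fun_eq_iff split: split_indicator)
    with True show ?thesis
      by (simp add: emeasure_distr_e_atMost)
  qed (simp add: h_def)
  have "{\<omega> \<in> stays_below n. e (Suc n) \<omega> \<le> \<phi> (X n \<omega>, e n \<omega>)}
      = {\<omega> \<in> space M. \<omega> \<in> stays_below n \<and> e (Suc n) \<omega> \<le> \<phi> (X n \<omega>, e n \<omega>)}"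
    using sets.sets_into_space[OF stays_below_events] by blast
  then have "emeasure M {\<omega> \<in> stays_below n. e (Suc n) \<omega> \<le> \<phi> (X n \<omega>, e n \<omega>)}
      = (\<integral>\<^sup>+\<omega>. indicator {\<omega> \<in> space M. \<omega> \<in> stays_below n \<and> e (Suc n) \<omega> \<le> \<phi> (X n \<omega>, e n \<omega>)} \<omega> \<partial>M)"
    by simp
  also have "\<dots> = (\<integral>\<^sup>+\<omega>. h ((initial \<omega>, truncate_seq n (noise \<omega>)), e (Suc n) \<omega>) \<partial>M)"
    by (rule nn_integral_cong) (auto simp: h_def past past_def split: split_indicator)
  also have "\<dots> = (\<integral>\<^sup>+\<omega>. \<integral>\<^sup>+v. h ((initial \<omega>, truncate_seq n (noise \<omega>)), v) \<partial>distr M borel (e (Suc n)) \<partial>M)"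
    by (rule nn_integral_next_noise) measurable
  also have "\<dots> = (\<integral>\<^sup>+\<omega>\<in>stays_below n. (\<integral>\<^sup>+u\<in>{..\<phi> (X n \<omega>, e n \<omega>)}. ennreal (f u) \<partial>lborel) \<partial>M)"
    by (rule nn_integral_cong) (simp add: h_next past past_def split: split_indicator)
  finally show ?thesis .
qed

lemma interval_measure_G:
  "interval_measure (\<lambda>z. G n (t, z))
     = distr (density M (indicator {\<omega> \<in> stays_below n. X n \<omega> \<le> t})) borel (e n)"
proof -
  have S: "{\<omega> \<in> stays_below n. X n \<omega> \<le> t} \<in> events"
    using stays_below_events by (auto simp: stays_below_def)
  have "(\<lambda>z. G n (t, z)) = cdf (distr (density M (indicator {\<omega> \<in> stays_below n. X n \<omega> \<le> t})) borel (e n))"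
    by (simp add: fun_eq_iff cdf_distr_restricted[OF S] G_def)
  then show ?thesis
    using interval_measure_cdf[OF finite_borel_measure_distr_restricted[OF S]] by simp
qed

lemma stays_below_Suc: "stays_below (Suc n) = {\<omega> \<in> stays_below n. X (Suc n) \<omega> \<le> x}"
  by (auto simp: stays_below_def le_Suc_eq)

lemma stays_below_Suc_next_noise_le:
  "{\<omega> \<in> stays_below n. e (Suc n) \<omega> \<le> min (min a x - s * e n \<omega> - r * X n \<omega>) b}
     = {\<omega> \<in> stays_below (Suc n). X (Suc n) \<omega> \<le> a \<and> e (Suc n) \<omega> \<le> b}"
proof -
  have "e (Suc n) \<omega> \<le> min (min a x - s * e n \<omega> - r * X n \<omega>) b
      \<longleftrightarrow> X (Suc n) \<omega> \<le> x \<and> X (Suc n) \<omega> \<le> a \<and> e (Suc n) \<omega> \<le> b" if "\<omega> \<in> stays_below n" for \<omega>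
    using X_Suc[of \<omega> n] that by (auto simp: stays_below_def)
  then show ?thesis
    by (auto simp: stays_below_Suc)
qed

lemma measurable_kernel [measurable]: "kernel y t \<in> borel_measurable borel"
proof -
  have "kernel y t = (\<lambda>z. if (min (fst y) x - s * z - snd y) / r < t then f (min (fst y) x - r * t - s * z) else 0)"
    by (simp add: fun_eq_iff kernel_def)
  also have "\<dots> \<in> borel_measurable borel"
    by measurable
  finally show ?thesis .
qed

lemma ennreal_kernel:
  "ennreal (kernel y t z)
     = indicator {(min (fst y) x - s * z - snd y) / r<..} t * ennreal (f (min (fst y) x - s * z - r * t))"
  by (simp add: kernel_def algebra_simps split: split_indicator)

lemma measurable_kernel_stays_below [measurable]:
  "(\<lambda>p. indicator {X n (snd p)..} (fst p) * ennreal (kernel y (fst p) (e n (snd p)))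
      * indicator (stays_below n) (snd p)) \<in> borel_measurable (lborel \<Otimes>\<^sub>M M)"
proof -
  have "(\<lambda>p. indicator {X n (snd p)..} (fst p) * ennreal (kernel y (fst p) (e n (snd p)))
      * indicator (stays_below n) (snd p))
    = (\<lambda>p. if snd p \<in> stays_below n \<and> X n (snd p) \<le> fst p
        \<and> (min (fst y) x - s * e n (snd p) - snd y) / r < fst p
      then ennreal (f (min (fst y) x - s * e n (snd p) - r * fst p)) else 0)"
    by (auto simp: fun_eq_iff ennreal_kernel split: split_indicator)
  also have "\<dots> \<in> borel_measurable (borel \<Otimes>\<^sub>M M)"
    by measurable
  finally show ?thesis
    by (simp cong: measurable_cong_sets)
qed

lemma nn_integral_kernel_G:
  "(\<integral>\<^sup>+t. (\<integral>\<^sup>+\<omega>\<in>stays_below n. indicator {X n \<omega>..} t * ennreal (kernel y t (e n \<omega>)) \<partial>M) \<partial>lborel)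
    = ennreal (G (Suc n) y / r)"
proof -
  define \<phi> where "\<phi> p = min (min (fst y) x - s * snd p - r * fst p) (snd y)" for p :: "real \<times> real"
  have [measurable]: "\<phi> \<in> borel_measurable (borel \<Otimes>\<^sub>M borel)"
    unfolding \<phi>_def by measurable
  interpret pair_sigma_finite lborel M ..
  have "(\<integral>\<^sup>+t. (\<integral>\<^sup>+\<omega>\<in>stays_below n. indicator {X n \<omega>..} t * ennreal (kernel y t (e n \<omega>)) \<partial>M) \<partial>lborel)
      = (\<integral>\<^sup>+\<omega>. \<integral>\<^sup>+t. indicator {X n \<omega>..} t * ennreal (kernel y t (e n \<omega>)) * indicator (stays_below n) \<omega>
          \<partial>lborel \<partial>M)"
    using Fubini[OF measurable_kernel_stays_below[of n y]] by simp
  also have "\<dots> = (\<integral>\<^sup>+\<omega>\<in>stays_below n. (\<integral>\<^sup>+t. indicator {X n \<omega>..} t * ennreal (kernel y t (e n \<omega>)) \<partial>lborel) \<partial>M)"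
    by (auto intro!: nn_integral_cong split: split_indicator)
  also have "\<dots> = (\<integral>\<^sup>+\<omega>\<in>stays_below n. ennreal (1 / r) *
      (\<integral>\<^sup>+u\<in>{..\<phi> (X n \<omega>, e n \<omega>)}. ennreal (f u) \<partial>lborel) \<partial>M)"
    using r_pos by (simp add: ennreal_kernel \<phi>_def nn_integral_reflected_density mult.assoc[symmetric])
  also have "\<dots> = ennreal (1 / r) * emeasure M {\<omega> \<in> stays_below n. e (Suc n) \<omega> \<le> \<phi> (X n \<omega>, e n \<omega>)}"
  proof -
    have [measurable]: "Measurable.pred (M \<Otimes>\<^sub>M borel) (\<lambda>p. snd p \<in> {..\<phi> (X n (fst p), e n (fst p))})"
      unfolding atMost_iff by measurable
    show ?thesis
      by (simp add: emeasure_next_noise_le nn_integral_cmult mult.assoc)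
  qed
  also have "{\<omega> \<in> stays_below n. e (Suc n) \<omega> \<le> \<phi> (X n \<omega>, e n \<omega>)}
      = {\<omega> \<in> stays_below (Suc n). X (Suc n) \<omega> \<le> fst y \<and> e (Suc n) \<omega> \<le> snd y}"
    unfolding \<phi>_def fst_conv snd_conv by (rule stays_below_Suc_next_noise_le)
  also have "ennreal (1 / r) * emeasure M \<dots> = ennreal (G (Suc n) y / r)"
    using r_pos by (simp add: G_def emeasure_eq_measure ennreal_mult'[symmetric] divide_inverse)
  finally show ?thesis .
qed

lemma Kop_G: "Kop r s f x (G n) y = G (Suc n) y"
proof -
  define J where "J t = (\<integral>\<^sup>+\<omega>\<in>stays_below n. indicator {X n \<omega>..} t * ennreal (kernel y t (e n \<omega>)) \<partial>M)" for t
  have inner: "(\<integral>z. kernel y t z \<partial>interval_measure (\<lambda>z. G n (t, z))) = enn2real (J t)" for t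
  proof -
    let ?S = "{\<omega> \<in> stays_below n. X n \<omega> \<le> t}"
    have [measurable]: "?S \<in> events"
      using stays_below_events by (auto simp: stays_below_def)
    have "(\<integral>z. kernel y t z \<partial>interval_measure (\<lambda>z. G n (t, z)))
        = enn2real (\<integral>\<^sup>+z. ennreal (kernel y t z) \<partial>distr (density M (indicator ?S)) borel (e n))"
      unfolding interval_measure_G by (rule integral_eq_nn_integral) (auto simp: kernel_def f_nonneg)
    also have "(\<integral>\<^sup>+z. ennreal (kernel y t z) \<partial>distr (density M (indicator ?S)) borel (e n)) = J t"
      by (simp add: nn_integral_distr nn_integral_density J_def)
         (auto intro!: nn_integral_cong split: split_indicator)
    finally show ?thesis .
  qed
  have J_integral: "(\<integral>\<^sup>+t. J t \<partial>lborel) = ennreal (G (Suc n) y / r)"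
    unfolding J_def by (rule nn_integral_kernel_G)
  have [measurable]: "J \<in> borel_measurable lborel"
    unfolding J_def using measurable_kernel_stays_below[of n y] by measurable
  have "AE t in lborel. J t \<noteq> \<infinity>"
    by (rule nn_integral_PInf_AE) (simp_all add: J_integral)
  then have "AE t in lborel. J t = ennreal (enn2real (J t))"
    by eventually_elim (simp add: less_top)
  then have "(\<integral>t. enn2real (J t) \<partial>lborel) = enn2real (\<integral>\<^sup>+t. J t \<partial>lborel)"
    by (subst enn2real_nn_integral_eq_integral) auto
  also have "\<dots> = G (Suc n) y / r"
    using r_pos by (simp add: J_integral G_def)
  finally show ?thesis
    using r_pos by (simp add: Kop_eq_kernel inner)
qed

lemma funpow_Kop_G: "(Kop r s f x ^^ n) (G 0) = G n"
proof (induction n)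
  case (Suc n)
  have "Kop r s f x (G n) = G (Suc n)"
    using Kop_G by (rule ext)
  with Suc show ?case
    by simp
qed simp

lemma G_0: "G 0 = (\<lambda>z. prob {\<omega> \<in> space M. X 0 \<omega> \<le> fst z \<and> e 0 \<omega> \<le> snd z})"
  by (simp add: fun_eq_iff G_def stays_below_def)

lemma run_max_le_iff_stays_below: "{\<omega> \<in> space M. run_max X n \<omega> \<le> ereal x} = stays_below n"
  by (cases "n = 0") (auto simp: run_max_def stays_below_def)

lemma tendsto_G: "(G n \<longlongrightarrow> prob (stays_below n)) (at_top \<times>\<^sub>F at_top)"
  using tendsto_prob_le_le_at_top[OF stays_below_events[of n], of "X n" "e n"]
  by (simp add: G_def[abs_def] split_beta')

end

theorem theorem2p2:
  fixes M :: "'a measure" and r s x :: real and f :: "real \<Rightarrow> real"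
    and e X :: "nat \<Rightarrow> 'a \<Rightarrow> real"
  assumes "prob_space M"
    and "r > 0"
    and "\<And>t. f t \<ge> 0" and "f \<in> borel_measurable borel"
    and "\<And>i. distributed M lborel (e i) (\<lambda>t. ennreal (f t))"
    and "prob_space.indep_vars M (\<lambda>_. borel) e UNIV"
    and "X 0 \<in> borel_measurable M"
    and "prob_space.indep_set M
           {(\<lambda>\<omega>. (X 0 \<omega>, e 0 \<omega>)) -` A \<inter> space M | A. A \<in> sets (borel :: (real \<times> real) measure)}
           {(\<lambda>\<omega> i. e (Suc i) \<omega>) -` A \<inter> space M | A. A \<in> sets (PiM (UNIV :: nat set) (\<lambda>_. borel :: real measure))}"
    and "\<And>i \<omega>. \<omega> \<in> space M \<Longrightarrow> X (Suc i) \<omega> - r * X i \<omega> = e (Suc i) \<omega> + s * e i \<omega>"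
  shows "\<forall>n. ((\<lambda>y. (Kop r s f x ^^ n)
                  (\<lambda>z. measure M {\<omega> \<in> space M. X 0 \<omega> \<le> fst z \<and> e 0 \<omega> \<le> snd z}) y)
             \<longlongrightarrow> measure M {\<omega> \<in> space M. run_max X n \<omega> \<le> ereal x})
           (at_top \<times>\<^sub>F at_top)"
proof
  fix n
  interpret arma_recursion M r s x f e X
    using assms by (intro arma_recursion.intro arma_recursion_axioms.intro) auto
  show "((\<lambda>y. (Kop r s f x ^^ n)
                  (\<lambda>z. measure M {\<omega> \<in> space M. X 0 \<omega> \<le> fst z \<and> e 0 \<omega> \<le> snd z}) y)
             \<longlongrightarrow> measure M {\<omega> \<in> space M. run_max X n \<omega> \<le> ereal x})
           (at_top \<times>\<^sub>F at_top)"
    using tendsto_G[of n] by (simp add: G_0[symmetric] funpow_Kop_G run_max_le_iff_stays_below)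
qed

end
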